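(* Let $w(t)$ be a stationary multi-state telegraph-like noise taking values in a finite set $\{w_1,\dots,w_M\}$ of real numbers, with transition-rate matrix $\Gamma$ (so that $\sum_j \Gamma_{jk}=0$ for every $k$) and stationary initial distribution $y(0)$ (a probability vector with $\Gamma y(0)=0$). Let $W=\mathrm{diag}(w_1,\dots,w_M)$. For a dynamical decoupling (DD) sequence of $N\ge 1$ ideal $\pi$ pulses applied at times $\alpha_1 t<\alpha_2 t<\dots<\alpha_N t$ in $(0,t)$, with $0<\alpha_1<\dots<\alpha_N<1$, set $\alpha_0=0$, $\alpha_{N+1}=1$, $a_n=\alpha_n-\alpha_{n-1}$ for $n=1,\dots,N+1$, and require the echo condition $a_1-a_2+a_3-\cdots+(-1)^N a_{N+1}=0$. The qubit coherence (decoherence function) is $$\langle x(t)\rangle=\sum_{j}\Big[e^{[\Gamma+(-1)^N iW]a_{N+1}t}\cdots e^{[\Gamma-iW]a_2 t}\,e^{[\Gamma+iW]a_1 t}\,y(0)\Big]_j .$$ Then, in the short-time limit $t\to 0$, among all DD sequences with the same number $N$ of pulses satisfying the echo condition, the Carr–Purcell–Meiboom–Gill (CPMG) sequence, i.e. $\alpha_n=\frac{2n-1}{2N}$ for $n=1,\dots,N$, is the global minimizer of the decoherence: the coefficient of the leading (third-order) term $t^3$ in the Taylor expansion of $1-\langle x(t)\rangle$ about $t=0$ has minimal absolute value at the CPMG timing.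
   Context: Physical setting: a qubit with Hamiltonian $H=S_z w(t)$ in a random classical field $w(t)$; $x=S_x+iS_y$ is the transverse polarization and $\langle x(t)\rangle$ its ensemble average. The telegraph-like noise jumps randomly among the values $w_j$ with probabilities $Y_j(t)$ obeying $\frac{d}{dt}Y_j=\sum_{j'}\Gamma_{jj'}Y_{j'}$. Ideal instantaneous $\pi$ pulses flip the spin between $+z$ and $-z$, equivalently flip the sign of the field, which yields the stated product-of-exponentials formula for $\langle x(t)\rangle$. *)

theory Defs
  imports "HOL-Analysis.Analysis"
begin

definition mat_pow :: "complex^'m^'m \<Rightarrow> nat \<Rightarrow> complex^'m^'m" where
  "mat_pow A k = ((\<lambda>B. A ** B) ^^ k) (mat 1)"

definition mat_exp :: "complex^'m^'m \<Rightarrow> complex^'m^'m" where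
  "mat_exp A = (\<chi> i j. (\<Sum>k. (mat_pow A k) $ i $ j / fact k))"

definition rate_matrix :: "real^'m^'m \<Rightarrow> bool" where
  "rate_matrix G \<longleftrightarrow> (\<forall>j k. j \<noteq> k \<longrightarrow> G $ j $ k \<ge> 0) \<and> (\<forall>k. (\<Sum>j\<in>UNIV. G $ j $ k) = 0)"

definition stationary_distr :: "real^'m^'m \<Rightarrow> real^'m \<Rightarrow> bool" where
  "stationary_distr G y \<longleftrightarrow> (\<forall>j. y $ j \<ge> 0) \<and> (\<Sum>j\<in>UNIV. y $ j) = 1 \<and> G *v y = 0"

definition alpha_ext :: "nat \<Rightarrow> (nat \<Rightarrow> real) \<Rightarrow> nat \<Rightarrow> real" where
  "alpha_ext N \<alpha> n = (if n = 0 then 0 else if n = N + 1 then 1 else \<alpha> n)"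

definition interval_len :: "nat \<Rightarrow> (nat \<Rightarrow> real) \<Rightarrow> nat \<Rightarrow> real" where
  "interval_len N \<alpha> n = alpha_ext N \<alpha> n - alpha_ext N \<alpha> (n - 1)"

definition DD_seq :: "nat \<Rightarrow> (nat \<Rightarrow> real) \<Rightarrow> bool" where
  "DD_seq N \<alpha> \<longleftrightarrow> 0 < \<alpha> 1 \<and> (\<forall>n. 1 \<le> n \<and> n < N \<longrightarrow> \<alpha> n < \<alpha> (n + 1)) \<and> \<alpha> N < 1
     \<and> (\<Sum>n = 1..N + 1. (-1) ^ (n - 1) * interval_len N \<alpha> n) = 0"

definition CPMG :: "nat \<Rightarrow> nat \<Rightarrow> real" where
  "CPMG N n = (2 * real n - 1) / (2 * real N)"

definition diagW :: "('m \<Rightarrow> real) \<Rightarrow> complex^'m^'m" where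
  "diagW w = (\<chi> i j. if i = j then complex_of_real (w i) else 0)"

fun evol :: "real^'m^'m \<Rightarrow> ('m \<Rightarrow> real) \<Rightarrow> real^'m \<Rightarrow> nat \<Rightarrow> (nat \<Rightarrow> real) \<Rightarrow> complex \<Rightarrow> nat \<Rightarrow> complex^'m" where
  "evol G w y N \<alpha> t 0 = (\<chi> j. complex_of_real (y $ j))"
| "evol G w y N \<alpha> t (Suc n) =
     mat_exp (\<chi> i j. complex_of_real (interval_len N \<alpha> (Suc n)) * t *
                 (complex_of_real (G $ i $ j) + (-1) ^ n * \<i> * diagW w $ i $ j))
       *v evol G w y N \<alpha> t n"

definition coherence :: "real^'m^'m \<Rightarrow> ('m \<Rightarrow> real) \<Rightarrow> real^'m \<Rightarrow> nat \<Rightarrow> (nat \<Rightarrow> real) \<Rightarrow> complex \<Rightarrow> complex" where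
  "coherence G w y N \<alpha> t = (\<Sum>j\<in>UNIV. evol G w y N \<alpha> t (N + 1) $ j)"

definition third_order_coeff :: "real^'m^'m \<Rightarrow> ('m \<Rightarrow> real) \<Rightarrow> real^'m \<Rightarrow> nat \<Rightarrow> (nat \<Rightarrow> real) \<Rightarrow> complex" where
  "third_order_coeff G w y N \<alpha> = (deriv ^^ 3) (\<lambda>t. 1 - coherence G w y N \<alpha> t) 0 / fact 3"

end

theory Submission
  imports Defs
begin

text \<open>Expanding each \<open>exp (t a\<^sub>n (\<Gamma> \<plusminus> i W))\<close> as a power series in \<open>t\<close>, the coefficients of
  order \<open>\<le> 3\<close> of the propagated state keep a fixed shape: \<open>\<Gamma> y = 0\<close> and the vanishing column sums
  of \<open>\<Gamma>\<close> kill every contribution except those along \<open>W y\<close>, \<open>\<Gamma> W y\<close>, \<open>W\<^sup>2 y\<close> and \<open>W\<^sup>3 y\<close>.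
  Under the echo condition the \<open>t\<^sup>3\<close> coefficient of \<open>1 - \<langle>x(t)\<rangle>\<close> becomes
  \<open>-(\<Sum> W \<Gamma> W y) \<integral>\<^sub>0\<^sup>1 F\<^sup>2\<close>, where \<open>F\<close> integrates the \<open>\<plusminus>1\<close> modulation that flips at every pulse.
  On an interval of length \<open>a\<close> one has \<open>\<integral> F\<^sup>2 \<ge> a\<^sup>3/12\<close>, and \<open>= a\<^sup>3/3\<close> on the first and last
  interval, where \<open>F\<close> vanishes at an end; bounding these cubes by their tangent lines at the CPMG
  lengths \<open>1/N\<close> and \<open>1/(2N)\<close> gives \<open>\<integral>\<^sub>0\<^sup>1 F\<^sup>2 \<ge> 1/(12 N\<^sup>2)\<close>, with equality for CPMG.\<close>

section \<open>Power series of the matrix exponential\<close>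

lemma mat_pow_0 [simp]: "mat_pow A 0 = mat 1"
  by (simp add: mat_pow_def)

lemma mat_pow_Suc: "mat_pow A (Suc k) = A ** mat_pow A k"
  by (simp add: mat_pow_def)

lemma mat_pow_Suc_mult_vec: "mat_pow A (Suc k) *v v = A *v (mat_pow A k *v v)"
  by (simp add: mat_pow_Suc matrix_vector_mul_assoc)

lemma mat_pow_scale:
  "mat_pow (\<chi> i j. t * B$i$j) k = (\<chi> i j. t^k * mat_pow B k $ i $ j)"
proof (induction k)
  case 0 then show ?case by (simp add: vec_eq_iff mat_def)
next
  case (Suc k)
  show ?case unfolding mat_pow_Suc Suc
    by (simp add: vec_eq_iff matrix_matrix_mult_def sum_distrib_left algebra_simps)
qed

lemma norm_mat_pow_entry_le:
  fixes B :: "complex^'m^'m"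
  shows "norm (mat_pow B k $ i $ j) \<le> (\<Sum>a\<in>UNIV. \<Sum>l\<in>UNIV. norm (B$a$l)) ^ k"
proof (induction k arbitrary: i j)
  case 0 then show ?case by (simp add: mat_def)
next
  case (Suc k)
  define M where "M = (\<Sum>a\<in>UNIV. \<Sum>l\<in>UNIV. norm (B$a$l))"
  have row: "(\<Sum>l\<in>UNIV. norm (B$i$l)) \<le> M"
    unfolding M_def by (rule member_le_sum) (auto intro: sum_nonneg)
  have "norm (mat_pow B (Suc k) $ i $ j) = norm (\<Sum>l\<in>UNIV. B$i$l * mat_pow B k $ l $ j)"
    by (simp add: mat_pow_Suc matrix_matrix_mult_def)
  also have "\<dots> \<le> (\<Sum>l\<in>UNIV. norm (B$i$l) * M^k)"
    by (rule order_trans[OF norm_sum], rule sum_mono)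
       (simp add: norm_mult mult_left_mono Suc[unfolded M_def[symmetric]])
  also have "\<dots> = (\<Sum>l\<in>UNIV. norm (B$i$l)) * M^k" by (simp add: sum_distrib_right)
  also have "\<dots> \<le> M * M^k"
    by (rule mult_right_mono[OF row]) (simp add: M_def sum_nonneg)
  finally show ?case by (simp add: M_def)
qed

definition mat_exp_fps :: "complex^'m^'m \<Rightarrow> 'm \<Rightarrow> 'm \<Rightarrow> complex fps" where
  "mat_exp_fps B i j = Abs_fps (\<lambda>k. mat_pow B k $ i $ j / fact k)"

lemma has_fps_expansion_mat_exp:
  fixes B :: "complex^'m^'m"
  shows "(\<lambda>t. mat_exp (\<chi> i j. t * B$i$j) $ i $ j) has_fps_expansion mat_exp_fps B i j"
proof -
  define M where "M = (\<Sum>a\<in>UNIV. \<Sum>l\<in>UNIV. norm (B$a$l))"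
  have "summable (\<lambda>n. M^n / fact n)" using summable_exp[of M] by (simp add: field_simps)
  then have summable: "summable (\<lambda>n. fps_nth (mat_exp_fps B i j) n * 1 ^ n)"
    by (rule summable_norm_cancel[OF summable_comparison_test[rotated]])
       (use norm_mat_pow_entry_le[of B _ i j] in
         \<open>auto simp: mat_exp_fps_def M_def norm_divide divide_right_mono\<close>)
  then have "fps_conv_radius (mat_exp_fps B i j) \<ge> 1"
    unfolding fps_conv_radius_def using conv_radius_geI[OF summable] by (simp add: one_ereal_def)
  then have radius: "fps_conv_radius (mat_exp_fps B i j) > 0"
    by (rule less_le_trans[rotated]) simp
  have "eval_fps (mat_exp_fps B i j) t = mat_exp (\<chi> i j. t * B$i$j) $ i $ j" for t
    unfolding eval_fps_def mat_exp_fps_def mat_exp_def mat_pow_scale vec_lambda_beta fps_nth_Abs_fps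
    by (simp add: mult.commute)
  then show ?thesis unfolding has_fps_expansion_def using radius by simp
qed
section \<open>The third-order coefficient\<close>

definition entry_sum :: "'a::comm_monoid_add^'m \<Rightarrow> 'a" where
  "entry_sum v = (\<Sum>j\<in>UNIV. v$j)"

lemma entry_sum_add: "entry_sum (x + y) = entry_sum x + entry_sum y"
  by (simp add: entry_sum_def sum.distrib)

lemma entry_sum_diff: "entry_sum (x - y) = entry_sum x - entry_sum (y :: 'a::ab_group_add^'m)"
  by (simp add: entry_sum_def sum_subtractf)

lemma entry_sum_scale: "entry_sum (c *s x) = c * entry_sum (x :: 'a::comm_semiring_0^'m)"
  by (simp add: entry_sum_def sum_distrib_left)

definition cmat :: "real^'m^'m \<Rightarrow> complex^'m^'m" where
  "cmat G = (\<chi> i j. complex_of_real (G$i$j))"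

definition cvec :: "real^'m \<Rightarrow> complex^'m" where
  "cvec y = (\<chi> j. complex_of_real (y$j))"

lemma entry_sum_rate_matrix_mult:
  assumes "rate_matrix G" shows "entry_sum (cmat G *v v) = 0"
proof -
  have "entry_sum (cmat G *v v) = (\<Sum>j\<in>UNIV. (\<Sum>i\<in>UNIV. complex_of_real (G$i$j)) * v$j)"
    unfolding entry_sum_def cmat_def matrix_vector_mult_def
    by (simp add: sum_distrib_right) (rule sum.swap)
  also have "\<dots> = 0" using assms unfolding rate_matrix_def by (simp flip: of_real_sum)
  finally show ?thesis .
qed

lemma stationary_distr_cmat_mult:
  assumes "stationary_distr G y" shows "cmat G *v cvec y = 0"
proof -
  from assms have "\<And>i. (\<Sum>j\<in>UNIV. G$i$j * y$j) = 0"
    by (auto simp: stationary_distr_def vec_eq_iff matrix_vector_mult_def)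
  then show ?thesis
    by (simp add: vec_eq_iff matrix_vector_mult_def cmat_def cvec_def flip: of_real_sum of_real_mult)
qed

definition interval_generator ::
    "real^'m^'m \<Rightarrow> ('m \<Rightarrow> real) \<Rightarrow> nat \<Rightarrow> (nat \<Rightarrow> real) \<Rightarrow> nat \<Rightarrow> complex^'m^'m" where
  "interval_generator G w N \<alpha> n = (\<chi> i j. complex_of_real (interval_len N \<alpha> n) *
     (complex_of_real (G $ i $ j) + (-1) ^ (n - 1) * \<i> * diagW w $ i $ j))"

lemma interval_generator_scale:
  "(\<chi> i j. complex_of_real (interval_len N \<alpha> (Suc n)) * t *
      (complex_of_real (G $ i $ j) + (-1) ^ n * \<i> * diagW w $ i $ j))
   = (\<chi> i j. t * interval_generator G w N \<alpha> (Suc n) $ i $ j)"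
  by (simp add: vec_eq_iff interval_generator_def algebra_simps)

lemma interval_generator_mult_vec:
  "interval_generator G w N \<alpha> (Suc n) *v v =
     complex_of_real (interval_len N \<alpha> (Suc n)) *s (cmat G *v v)
     + (complex_of_real (interval_len N \<alpha> (Suc n) * (-1)^n) * \<i>) *s (diagW w *v v)"
  by (simp add: vec_eq_iff interval_generator_def cmat_def matrix_vector_mult_def
      sum.distrib sum_distrib_left algebra_simps)

fun evol_fps ::
    "real^'m^'m \<Rightarrow> ('m \<Rightarrow> real) \<Rightarrow> real^'m \<Rightarrow> nat \<Rightarrow> (nat \<Rightarrow> real) \<Rightarrow> nat \<Rightarrow> 'm \<Rightarrow> complex fps" where
  "evol_fps G w y N \<alpha> 0 j = fps_const (complex_of_real (y$j))"
| "evol_fps G w y N \<alpha> (Suc n) j =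
     (\<Sum>k\<in>UNIV. mat_exp_fps (interval_generator G w N \<alpha> (Suc n)) j k * evol_fps G w y N \<alpha> n k)"

lemma has_fps_expansion_evol:
  "(\<lambda>t. evol G w y N \<alpha> t n $ j) has_fps_expansion evol_fps G w y N \<alpha> n j"
proof (induction n arbitrary: j)
  case 0 then show ?case by simp
next
  case (Suc n)
  show ?case
    unfolding evol.simps evol_fps.simps interval_generator_scale matrix_vector_mult_def vec_lambda_beta
    by (intro has_fps_expansion_sum has_fps_expansion_mult has_fps_expansion_mat_exp Suc)
qed

definition evol_coeff ::
    "real^'m^'m \<Rightarrow> ('m \<Rightarrow> real) \<Rightarrow> real^'m \<Rightarrow> nat \<Rightarrow> (nat \<Rightarrow> real) \<Rightarrow> nat \<Rightarrow> nat \<Rightarrow> complex^'m" where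
  "evol_coeff G w y N \<alpha> n p = (\<chi> j. fps_nth (evol_fps G w y N \<alpha> n j) p)"

lemma evol_coeff_0: "evol_coeff G w y N \<alpha> 0 p = (if p = 0 then cvec y else 0)"
  by (simp add: evol_coeff_def cvec_def vec_eq_iff)

lemma evol_coeff_Suc:
  "evol_coeff G w y N \<alpha> (Suc n) p = (\<Sum>i=0..p. (1 / fact i) *s
     (mat_pow (interval_generator G w N \<alpha> (Suc n)) i *v evol_coeff G w y N \<alpha> n (p - i)))"
  by (simp add: vec_eq_iff evol_coeff_def fps_sum_nth fps_mult_nth mat_exp_fps_def
      matrix_vector_mult_def sum_distrib_left, subst sum.swap, simp add: algebra_simps)

lemma evol_coeff_Suc_low_orders:
  fixes G :: "real^'m^'m" and w y N \<alpha> n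
  defines "B \<equiv> \<lambda>v. interval_generator G w N \<alpha> (Suc n) *v v"
  defines "v \<equiv> evol_coeff G w y N \<alpha> n"
  shows "evol_coeff G w y N \<alpha> (Suc n) 0 = v 0"
    and "evol_coeff G w y N \<alpha> (Suc n) 1 = v 1 + B (v 0)"
    and "evol_coeff G w y N \<alpha> (Suc n) 2 = v 2 + B (v 1) + (1/2) *s B (B (v 0))"
    and "evol_coeff G w y N \<alpha> (Suc n) 3 =
           v 3 + B (v 2) + (1/2) *s B (B (v 1)) + (1/6) *s B (B (B (v 0)))"
  unfolding evol_coeff_Suc B_def v_def
  by (simp_all add: numeral_3_eq_3 numeral_2_eq_2 mat_pow_Suc_mult_vec vec_eq_iff)

text \<open>With the modulation \<open>f = \<plusminus>1\<close> that flips sign at each pulse and \<open>F \<tau> = \<integral>\<^sub>0\<^sup>\<tau> f\<close>,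
  these are \<open>F(\<alpha>\<^sub>n)\<close>, \<open>\<integral>\<^sub>0\<^sup>\<alpha>\<^sub>n F\<close> and \<open>\<integral>\<^sub>0\<^sup>\<alpha>\<^sub>n F\<^sup>2\<close>, accumulated interval by interval.\<close>

fun modulation_int :: "nat \<Rightarrow> (nat \<Rightarrow> real) \<Rightarrow> nat \<Rightarrow> real" where
  "modulation_int N \<alpha> 0 = 0"
| "modulation_int N \<alpha> (Suc n) = modulation_int N \<alpha> n + (-1)^n * interval_len N \<alpha> (Suc n)"

fun modulation_int_area :: "nat \<Rightarrow> (nat \<Rightarrow> real) \<Rightarrow> nat \<Rightarrow> real" where
  "modulation_int_area N \<alpha> 0 = 0"
| "modulation_int_area N \<alpha> (Suc n) = modulation_int_area N \<alpha> n
     + interval_len N \<alpha> (Suc n) * modulation_int N \<alpha> n + (-1)^n * interval_len N \<alpha> (Suc n)^2 / 2"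

fun modulation_int_sq :: "nat \<Rightarrow> (nat \<Rightarrow> real) \<Rightarrow> nat \<Rightarrow> real" where
  "modulation_int_sq N \<alpha> 0 = 0"
| "modulation_int_sq N \<alpha> (Suc n) = modulation_int_sq N \<alpha> n
     + interval_len N \<alpha> (Suc n) * modulation_int N \<alpha> n ^ 2
     + (-1)^n * interval_len N \<alpha> (Suc n)^2 * modulation_int N \<alpha> n + interval_len N \<alpha> (Suc n)^3 / 3"

lemma modulation_int_eq_sum:
  "modulation_int N \<alpha> n = (\<Sum>k=1..n. (-1)^(k-1) * interval_len N \<alpha> k)"
  by (induction n) auto

text \<open>The induction step for the expansion coefficients: one free-evolution interval with
  generator \<open>a (\<Gamma> + s i W)\<close> preserves their shape up to order 3.\<close>

lemma low_order_ansatz_step: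
  fixes Gam W :: "complex^'m^'m" and y v1 v2 v3 :: "complex^'m" and a s S R Q :: real
  assumes Gam_y: "Gam *v y = 0" and Gam_sum: "\<And>v. entry_sum (Gam *v v) = 0"
    and B: "\<And>v. B v = complex_of_real a *s (Gam *v v) + (complex_of_real (a * s) * \<i>) *s (W *v v)"
    and s: "s = 1 \<or> s = -1"
    and v1: "v1 = (\<i> * complex_of_real S) *s (W *v y)"
    and v2: "v2 = (\<i> * complex_of_real R) *s (Gam *v (W *v y))
                  - complex_of_real (S^2/2) *s (W *v (W *v y))"
    and v3: "entry_sum v3 = - c * complex_of_real (S * R - Q) - \<i> * m3 * complex_of_real (S^3/6)"
    and c: "c = entry_sum (W *v (Gam *v (W *v y)))"
    and m3: "m3 = entry_sum (W *v (W *v (W *v y)))"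
  shows "v1 + B y = (\<i> * complex_of_real (S + s * a)) *s (W *v y)"
    and "v2 + B v1 + (1/2) *s B (B y) =
         (\<i> * complex_of_real (R + a * S + s * a^2/2)) *s (Gam *v (W *v y))
            - complex_of_real ((S + s * a)^2/2) *s (W *v (W *v y))"
    and "entry_sum (v3 + B v2 + (1/2) *s B (B v1) + (1/6) *s B (B (B y))) =
         - c * complex_of_real ((S + s * a) * (R + a * S + s * a^2/2)
                                 - (Q + a * S^2 + s * a^2 * S + a^3/3))
           - \<i> * m3 * complex_of_real ((S + s * a)^3/6)"
proof -
  note lin = B Gam_y Gam_sum vector_scalar_commute matrix_vector_right_distrib
    matrix_vector_mult_diff_distrib entry_sum_add entry_sum_diff entry_sum_scale
  show "v1 + B y = (\<i> * complex_of_real (S + s * a)) *s (W *v y)"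
    using s by (auto simp: lin v1 vec_eq_iff algebra_simps)
  show "v2 + B v1 + (1/2) *s B (B y) =
         (\<i> * complex_of_real (R + a * S + s * a^2/2)) *s (Gam *v (W *v y))
            - complex_of_real ((S + s * a)^2/2) *s (W *v (W *v y))"
    using s by (auto simp: lin v1 v2 vec_eq_iff algebra_simps power2_eq_square)
  show "entry_sum (v3 + B v2 + (1/2) *s B (B v1) + (1/6) *s B (B (B y))) =
         - c * complex_of_real ((S + s * a) * (R + a * S + s * a^2/2)
                                 - (Q + a * S^2 + s * a^2 * S + a^3/3))
           - \<i> * m3 * complex_of_real ((S + s * a)^3/6)"
    using s by (simp add: lin v1 v2 v3 flip: c m3)
      (elim disjE; simp add: field_simps power2_eq_square power3_eq_cube)
qed

lemma evol_coeff_low_orders: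
  fixes G :: "real^'m^'m" and w :: "'m \<Rightarrow> real" and y :: "real^'m"
  assumes G: "rate_matrix G" and y: "stationary_distr G y"
  defines "u \<equiv> diagW w *v cvec y"
  defines "c \<equiv> entry_sum (diagW w *v (cmat G *v u))"
  defines "m3 \<equiv> entry_sum (diagW w *v (diagW w *v u))"
  shows "evol_coeff G w y N \<alpha> n 0 = cvec y
    \<and> evol_coeff G w y N \<alpha> n 1 = (\<i> * complex_of_real (modulation_int N \<alpha> n)) *s u
    \<and> evol_coeff G w y N \<alpha> n 2 = (\<i> * complex_of_real (modulation_int_area N \<alpha> n)) *s (cmat G *v u)
          - complex_of_real (modulation_int N \<alpha> n ^ 2 / 2) *s (diagW w *v u)
    \<and> entry_sum (evol_coeff G w y N \<alpha> n 3) =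
          - c * complex_of_real (modulation_int N \<alpha> n * modulation_int_area N \<alpha> n
                                 - modulation_int_sq N \<alpha> n)
          - \<i> * m3 * complex_of_real (modulation_int N \<alpha> n ^ 3 / 6)"
proof (induction n)
  case 0
  then show ?case by (simp add: evol_coeff_0 entry_sum_def)
next
  case (Suc n)
  have s: "(-1::real)^n = 1 \<or> (-1::real)^n = -1"
    by (cases "even n") auto
  note IH = Suc[THEN conjunct1] Suc[THEN conjunct2, THEN conjunct1]
    Suc[THEN conjunct2, THEN conjunct2, THEN conjunct1] Suc[THEN conjunct2, THEN conjunct2, THEN conjunct2]
  note step = low_order_ansatz_step[OF stationary_distr_cmat_mult[OF y] entry_sum_rate_matrix_mult[OF G]
     interval_generator_mult_vec s IH(2)[unfolded u_def] IH(3)[unfolded u_def]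
     IH(4)[unfolded u_def c_def m3_def] refl refl]
  show ?case
    unfolding evol_coeff_Suc_low_orders IH(1) modulation_int.simps modulation_int_area.simps
      modulation_int_sq.simps
    using step by (simp add: u_def c_def m3_def)
qed

text \<open>The echo condition \<open>F(1) = 0\<close> removes the pure-dephasing term \<open>m3\<close> and leaves only
  \<open>\<integral>\<^sub>0\<^sup>1 F\<^sup>2\<close>.\<close>

lemma third_order_coeff_eq:
  fixes G :: "real^'m^'m" and w :: "'m \<Rightarrow> real" and y :: "real^'m"
  assumes G: "rate_matrix G" and y: "stationary_distr G y"
    and echo: "modulation_int N \<alpha> (N+1) = 0"
  shows "third_order_coeff G w y N \<alpha> =
     - entry_sum (diagW w *v (cmat G *v (diagW w *v cvec y))) * complex_of_real (modulation_int_sq N \<alpha> (N+1))"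
proof -
  have expansion: "(\<lambda>t. 1 - coherence G w y N \<alpha> t) has_fps_expansion (1 - (\<Sum>j\<in>UNIV. evol_fps G w y N \<alpha> (N+1) j))"
    unfolding coherence_def
    by (intro has_fps_expansion_diff has_fps_expansion_1 has_fps_expansion_sum has_fps_expansion_evol)
  have "third_order_coeff G w y N \<alpha> = fps_nth (1 - (\<Sum>j\<in>UNIV. evol_fps G w y N \<alpha> (N+1) j)) 3"
    unfolding third_order_coeff_def using fps_nth_fps_expansion[OF expansion, of 3] by simp
  also have "\<dots> = - entry_sum (evol_coeff G w y N \<alpha> (N+1) 3)"
    by (simp add: fps_sum_nth entry_sum_def evol_coeff_def)
  finally show ?thesis
    using evol_coeff_low_orders[OF G y, of w N \<alpha> "N+1"] echo
    by (simp del: modulation_int.simps modulation_int_area.simps modulation_int_sq.simps)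
qed

section \<open>Minimality of the CPMG timing\<close>

lemma interval_len_sum: "(\<Sum>k=1..n. interval_len N \<alpha> k) = alpha_ext N \<alpha> n"
  by (induction n) (auto simp: interval_len_def alpha_ext_def)

lemma DD_seq_modulation_int_end: "DD_seq N \<alpha> \<Longrightarrow> modulation_int N \<alpha> (N+1) = 0"
  by (simp add: DD_seq_def modulation_int_eq_sum del: modulation_int.simps)

lemma DD_seq_interval_len_pos:
  assumes dd: "DD_seq N \<alpha>" and N: "N \<ge> 1" and k: "1 \<le> k" "k \<le> N + 1"
  shows "interval_len N \<alpha> k > 0"
proof -
  from dd have a1: "0 < \<alpha> 1" and mono: "\<And>n. 1 \<le> n \<Longrightarrow> n < N \<Longrightarrow> \<alpha> n < \<alpha> (n + 1)"
    and aN: "\<alpha> N < 1" unfolding DD_seq_def by auto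
  consider "k = 1" | "k = N + 1" | "2 \<le> k" "k \<le> N" using k N by linarith
  then show ?thesis
  proof cases
    case 1 then show ?thesis using a1 N by (simp add: interval_len_def alpha_ext_def)
  next
    case 2 then show ?thesis using aN N by (simp add: interval_len_def alpha_ext_def)
  next
    case 3
    have "\<alpha> (k - 1) < \<alpha> (k - 1 + 1)" using mono[of "k-1"] 3 by simp
    then show ?thesis using 3 by (auto simp: interval_len_def alpha_ext_def)
  qed
qed

lemma modulation_int_sq_Suc_ge:
  assumes "interval_len N \<alpha> (Suc n) \<ge> 0"
  shows "modulation_int_sq N \<alpha> (Suc n) \<ge> modulation_int_sq N \<alpha> n + interval_len N \<alpha> (Suc n)^3 / 12"
proof -
  define a S s where "a = interval_len N \<alpha> (Suc n)" and "S = modulation_int N \<alpha> n"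
    and "s = (-1::real)^n"
  have "s = 1 \<or> s = -1" unfolding s_def by (cases "even n") auto
  then have "a * S^2 + s * a^2 * S + a^3/3 = a^3/12 + a * (S + s * a / 2)^2"
    by (elim disjE) (simp_all add: field_simps power2_eq_square power3_eq_cube)
  moreover have "a * (S + s * a / 2)^2 \<ge> 0" using assms by (simp add: a_def)
  ultimately show ?thesis by (simp add: a_def S_def s_def)
qed

lemma modulation_int_sq_Suc_closing:
  assumes "modulation_int N \<alpha> (Suc n) = 0"
  shows "modulation_int_sq N \<alpha> (Suc n) = modulation_int_sq N \<alpha> n + interval_len N \<alpha> (Suc n)^3 / 3"
proof -
  define a s where "a = interval_len N \<alpha> (Suc n)" and "s = (-1::real)^n"
  have S: "modulation_int N \<alpha> n = - s * a" using assms by (simp add: a_def s_def)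
  have "s^2 = 1" by (simp add: s_def flip: power_mult)
  then show ?thesis
    by (simp add: S flip: a_def s_def) (simp add: power2_eq_square power3_eq_cube algebra_simps)
qed

lemma modulation_int_sq_ge_cubes:
  assumes "n \<ge> 1" and "\<And>k. 1 \<le> k \<Longrightarrow> k \<le> n \<Longrightarrow> interval_len N \<alpha> k \<ge> 0"
  shows "modulation_int_sq N \<alpha> n \<ge> interval_len N \<alpha> 1 ^ 3 / 3 + (\<Sum>k=2..n. interval_len N \<alpha> k ^ 3 / 12)"
  using assms
proof (induction n rule: nat_induct_at_least)
  case base
  then show ?case by simp
next
  case (Suc n)
  then show ?case
    using modulation_int_sq_Suc_ge[of N \<alpha> n] by (simp add: numeral_2_eq_2)
qed

text \<open>Tangent-line (convexity) bounds at the CPMG lengths \<open>1/(2N)\<close> for the end intervals and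
  \<open>1/N\<close> for the inner ones.\<close>

lemma sum_cubes_lower_bound:
  fixes a :: "nat \<Rightarrow> real" and N :: nat
  assumes N: "N \<ge> 1" and nonneg: "\<And>k. a k \<ge> 0" and total: "(\<Sum>k=1..N+1. a k) = 1"
  shows "a 1 ^ 3 / 3 + (\<Sum>k=2..N. a k ^ 3 / 12) + a (N+1) ^ 3 / 3 \<ge> 1 / (12 * real N ^ 2)"
proof -
  define x where "x = 1 / real N"
  have x: "x \<ge> 0" by (simp add: x_def)
  have outer: "b^3/3 \<ge> b * x^2/4 - x^3/12" if "b \<ge> 0" for b :: real
  proof -
    have "b^3/3 - (b * x^2/4 - x^3/12) = (b + x) * (2*b - x)^2 / 12"
      by (simp add: field_simps power2_eq_square power3_eq_cube)
    moreover have "0 \<le> \<dots>" using that x by simp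
    ultimately show ?thesis by linarith
  qed
  have inner: "b^3/12 \<ge> b * x^2/4 - x^3/6" if "b \<ge> 0" for b :: real
  proof -
    have "b^3/12 - (b * x^2/4 - x^3/6) = (b + 2*x) * (b - x)^2 / 12"
      by (simp add: field_simps power2_eq_square power3_eq_cube)
    moreover have "0 \<le> \<dots>" using that x by simp
    ultimately show ?thesis by linarith
  qed
  have split: "a 1 + (\<Sum>k=2..N. a k) + a (N+1) = 1"
    using total N by (simp add: sum.atLeast_Suc_atMost numeral_2_eq_2)
  have "(\<Sum>k=2..N. a k) * x^2/4 - (real N - 1) * x^3/6 = (\<Sum>k=2..N. a k * x^2/4 - x^3/6)"
    using N by (simp add: sum_subtractf sum_divide_distrib sum_distrib_right of_nat_diff)
  also have "\<dots> \<le> (\<Sum>k=2..N. a k ^ 3 / 12)"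
    by (intro sum_mono inner nonneg)
  finally have "(a 1 + (\<Sum>k=2..N. a k) + a (N+1)) * x^2/4 - x^3/6 - (real N - 1) * x^3/6
      \<le> a 1 ^ 3 / 3 + (\<Sum>k=2..N. a k ^ 3 / 12) + a (N+1) ^ 3 / 3"
    using outer[OF nonneg, of 1] outer[OF nonneg, of "N+1"] by (simp add: algebra_simps)
  moreover have "(a 1 + (\<Sum>k=2..N. a k) + a (N+1)) * x^2/4 - x^3/6 - (real N - 1) * x^3/6
      = 1 / (12 * real N ^ 2)"
  proof -
    have "real N * x^3 = x^2" using N by (simp add: x_def power2_eq_square power3_eq_cube)
    then have "(real N - 1) * x^3 = x^2 - x^3" by (simp add: algebra_simps)
    then have "x^2/4 - x^3/6 - (real N - 1) * x^3/6 = x^2/12" by linarith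
    then show ?thesis unfolding split by (simp add: x_def power_divide)
  qed
  ultimately show ?thesis by simp
qed

lemma DD_seq_modulation_int_sq_ge:
  assumes dd: "DD_seq N \<alpha>" and N: "N \<ge> 1"
  shows "modulation_int_sq N \<alpha> (N+1) \<ge> 1 / (12 * real N ^ 2)"
proof -
  define a where "a k = (if 1 \<le> k \<and> k \<le> N + 1 then interval_len N \<alpha> k else 0)" for k
  have pos: "interval_len N \<alpha> k \<ge> 0" if "1 \<le> k" "k \<le> N + 1" for k
    using DD_seq_interval_len_pos[OF dd N that] by simp
  have nonneg: "a k \<ge> 0" for k using pos by (simp add: a_def)
  have "(\<Sum>k=1..N+1. a k) = (\<Sum>k=1..N+1. interval_len N \<alpha> k)"
    by (intro sum.cong) (auto simp: a_def)
  also have "\<dots> = 1"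
    by (simp only: interval_len_sum) (simp add: alpha_ext_def)
  finally have total: "(\<Sum>k=1..N+1. a k) = 1" .
  have inner: "(\<Sum>k=2..N. interval_len N \<alpha> k ^ 3 / 12) = (\<Sum>k=2..N. a k ^ 3 / 12)"
    by (intro sum.cong) (auto simp: a_def)
  have "modulation_int_sq N \<alpha> (N+1) = modulation_int_sq N \<alpha> N + interval_len N \<alpha> (N+1) ^ 3 / 3"
    using modulation_int_sq_Suc_closing DD_seq_modulation_int_end[OF dd] by simp
  also have "\<dots> \<ge> a 1 ^ 3 / 3 + (\<Sum>k=2..N. a k ^ 3 / 12) + a (N+1) ^ 3 / 3"
    using modulation_int_sq_ge_cubes[OF N, of N \<alpha>] pos N unfolding inner by (simp add: a_def)
  finally show ?thesis using sum_cubes_lower_bound[OF N nonneg total] by linarith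
qed

lemma minus_one_power_pred_cases:
  assumes "k \<ge> 1"
  shows "((-1::real)^k = 1 \<and> (-1::real)^(k-1) = -1) \<or> ((-1::real)^k = -1 \<and> (-1::real)^(k-1) = 1)"
proof -
  obtain j where k: "k = Suc j" using assms by (cases k) auto
  show ?thesis unfolding k by (cases "even j") auto
qed

lemma interval_len_CPMG:
  assumes N: "N \<ge> 1" and k: "1 \<le> k" "k \<le> N + 1"
  shows "interval_len N (CPMG N) k = (if k = 1 \<or> k = N + 1 then 1 / (2 * real N) else 1 / real N)"
proof -
  consider "k = 1" | "k = N + 1" | "2 \<le> k" "k \<le> N" using k N by linarith
  then show ?thesis
  proof cases
    case 1 then show ?thesis using N by (simp add: interval_len_def alpha_ext_def CPMG_def)
  next
    case 2 then show ?thesis using N by (simp add: interval_len_def alpha_ext_def CPMG_def field_simps)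
  next
    case 3
    then have "real (k - 1) = real k - 1" by simp
    with 3 N show ?thesis by (auto simp: interval_len_def alpha_ext_def CPMG_def field_simps)
  qed
qed

lemma modulation_int_CPMG:
  assumes N: "N \<ge> 1"
  shows "1 \<le> k \<Longrightarrow> k \<le> N \<Longrightarrow> modulation_int N (CPMG N) k = (-1)^(k-1) / (2 * real N)
     \<and> modulation_int_sq N (CPMG N) k = 1 / (24 * real N^3) + (real k - 1) / (12 * real N^3)"
proof (induction k rule: nat_induct_at_least)
  case base
  have "interval_len N (CPMG N) 1 = 1 / (2 * real N)" using interval_len_CPMG[OF N, of 1] by simp
  then show ?case by (simp add: power3_eq_cube field_simps)
next
  case (Suc k)
  then have IH: "modulation_int N (CPMG N) k = (-1)^(k-1) / (2 * real N)"
    "modulation_int_sq N (CPMG N) k = 1 / (24 * real N^3) + (real k - 1) / (12 * real N^3)"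
    by auto
  have a: "interval_len N (CPMG N) (Suc k) = 1 / real N"
    using interval_len_CPMG[OF N, of "Suc k"] Suc by simp
  from minus_one_power_pred_cases[OF \<open>k \<ge> 1\<close>] show ?case
    using N by (auto simp: IH a power2_eq_square power3_eq_cube field_simps)
qed

lemma modulation_int_CPMG_end:
  assumes N: "N \<ge> 1"
  shows "modulation_int N (CPMG N) (N+1) = 0"
    and "modulation_int_sq N (CPMG N) (N+1) = 1 / (12 * real N^2)"
proof -
  have IH: "modulation_int N (CPMG N) N = (-1)^(N-1) / (2 * real N)"
    "modulation_int_sq N (CPMG N) N = 1 / (24 * real N^3) + (real N - 1) / (12 * real N^3)"
    using modulation_int_CPMG[OF N, of N] N by auto
  have a: "interval_len N (CPMG N) (Suc N) = 1 / (2 * real N)"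
    using interval_len_CPMG[OF N, of "Suc N"] by simp
  from minus_one_power_pred_cases[OF N]
  show "modulation_int N (CPMG N) (N+1) = 0"
    and "modulation_int_sq N (CPMG N) (N+1) = 1 / (12 * real N^2)"
    using N by (auto simp: IH a power2_eq_square power3_eq_cube field_simps)
qed

lemma DD_seq_CPMG:
  assumes N: "N \<ge> 1" shows "DD_seq N (CPMG N)"
  unfolding DD_seq_def
  using N modulation_int_CPMG_end(1)[OF N]
  by (auto simp: CPMG_def field_simps modulation_int_eq_sum simp del: modulation_int.simps)

theorem theorem1:
  fixes G :: "real^'m^'m" and w :: "'m \<Rightarrow> real" and y0 :: "real^'m" and N :: nat
  assumes "rate_matrix G"
    and "stationary_distr G y0"
    and "N \<ge> 1"
  shows "DD_seq N (CPMG N) \<and>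
    (\<forall>\<alpha>. DD_seq N \<alpha> \<longrightarrow>
       cmod (third_order_coeff G w y0 N (CPMG N)) \<le> cmod (third_order_coeff G w y0 N \<alpha>))"
proof (intro conjI allI impI)
  show "DD_seq N (CPMG N)" using DD_seq_CPMG[OF assms(3)] .
  fix \<alpha> assume dd: "DD_seq N \<alpha>"
  define c where "c = entry_sum (diagW w *v (cmat G *v (diagW w *v cvec y0)))"
  define q where "q = modulation_int_sq N \<alpha> (N+1)"
  have coeff_\<alpha>: "third_order_coeff G w y0 N \<alpha> = - c * complex_of_real q"
    unfolding c_def q_def by (rule third_order_coeff_eq[OF assms(1,2) DD_seq_modulation_int_end[OF dd]])
  have q_ge: "1 / (12 * real N^2) \<le> q"
    unfolding q_def by (rule DD_seq_modulation_int_sq_ge[OF dd assms(3)])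
  have coeff_CPMG: "third_order_coeff G w y0 N (CPMG N) = - c * complex_of_real (1 / (12 * real N^2))"
    unfolding c_def modulation_int_CPMG_end(2)[OF assms(3), symmetric]
    by (rule third_order_coeff_eq[OF assms(1,2) modulation_int_CPMG_end(1)[OF assms(3)]])
  show "cmod (third_order_coeff G w y0 N (CPMG N)) \<le> cmod (third_order_coeff G w y0 N \<alpha>)"
    unfolding coeff_\<alpha> coeff_CPMG norm_mult norm_minus_cancel mult_minus_left norm_of_real
    by (rule mult_left_mono) (use q_ge in \<open>auto simp: abs_of_nonneg\<close>)
qed

end
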